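(* Let $(W,\unlhd,\prec)$ be an intuitionistic modal Kripke frame, and let $\lhd$ denote the strict part of $\unlhd$ (i.e. $\unlhd$ minus the identity). The following are equivalent: (i) $\prec\,=\,\lhd$ and the Alexandroff topology on $W$ whose open sets are the $\unlhd$-upward closed sets is scattered; (ii) $(W,\unlhd,\prec)$ is a frame for $\mathsf{KM}$ (every theorem of $\mathsf{KM}$ is valid in it); (iii) $\prec\,=\,\lhd$ and there is no infinite strictly ascending $\lhd$-chain $w_0\lhd w_1\lhd w_2\lhd\cdots$ in $W$.
   Context: An intuitionistic modal Kripke frame is a triple $(W,\unlhd,\prec)$ with $\unlhd$ a partial order on $W$ and $\prec$ a binary relation such that $w\unlhd v$ and $v\prec x$ imply $w\prec x$. Formulas are built from propositional variables, $\bot,\to,\wedge,\vee,\Box$. A valuation assigns to each variable a $\unlhd$-upward closed subset of $W$; connectives are interpreted as in the Heyting algebra of upsets, and $\Box A$ denotes $\{w\mid \forall x(w\prec x\Rightarrow x\in A)\}$. A formula is valid in the frame if it denotes $W$ under every valuation. $\mathsf{KM}$ is the smallest set of formulas containing all axioms of intuitionistic propositional logic, $\Box(A\to B)\to(\Box A\to\Box B)$, $(\Box A\to A)\to A$ and $\Box A\to((B\to A)\vee B)$, and closed under modus ponens, necessitation ($A/\Box A$) and substitution. A topological space is scattered if every nonempty subset has an isolated point. *)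

theory Defs
  imports Main
begin

datatype 'v fm = Var 'v | Bot | Imp "'v fm" "'v fm" | Conj "'v fm" "'v fm"
  | Disj "'v fm" "'v fm" | Box "'v fm"

primrec subst :: "('v \<Rightarrow> 'u fm) \<Rightarrow> 'v fm \<Rightarrow> 'u fm" where
  "subst s (Var p) = s p"
| "subst s Bot = Bot"
| "subst s (Imp A B) = Imp (subst s A) (subst s B)"
| "subst s (Conj A B) = Conj (subst s A) (subst s B)"
| "subst s (Disj A B) = Disj (subst s A) (subst s B)"
| "subst s (Box A) = Box (subst s A)"

inductive_set KM :: "nat fm set" where
  ax1: "Imp A (Imp B A) \<in> KM"
| ax2: "Imp (Imp A (Imp B C)) (Imp (Imp A B) (Imp A C)) \<in> KM"
| ax3: "Imp (Conj A B) A \<in> KM"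
| ax4: "Imp (Conj A B) B \<in> KM"
| ax5: "Imp A (Imp B (Conj A B)) \<in> KM"
| ax6: "Imp A (Disj A B) \<in> KM"
| ax7: "Imp B (Disj A B) \<in> KM"
| ax8: "Imp (Imp A C) (Imp (Imp B C) (Imp (Disj A B) C)) \<in> KM"
| ax9: "Imp Bot A \<in> KM"
| axK: "Imp (Box (Imp A B)) (Imp (Box A) (Box B)) \<in> KM"
| axL: "Imp (Imp (Box A) A) A \<in> KM"
| axKM: "Imp (Box A) (Disj (Imp B A) B) \<in> KM"
| mp: "A \<in> KM \<Longrightarrow> Imp A B \<in> KM \<Longrightarrow> B \<in> KM"
| nec: "A \<in> KM \<Longrightarrow> Box A \<in> KM"
| sub: "A \<in> KM \<Longrightarrow> subst s A \<in> KM"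

text \<open>Intuitionistic modal Kripke frame on the carrier type 'w
(W = UNIV): le is a partial order, and le;R is contained in R.\<close>
definition imk_frame :: "('w \<Rightarrow> 'w \<Rightarrow> bool) \<Rightarrow> ('w \<Rightarrow> 'w \<Rightarrow> bool) \<Rightarrow> bool" where
  "imk_frame le R \<longleftrightarrow>
     (\<forall>w. le w w) \<and> (\<forall>u v w. le u v \<longrightarrow> le v w \<longrightarrow> le u w) \<and>
     (\<forall>u v. le u v \<longrightarrow> le v u \<longrightarrow> u = v) \<and>
     (\<forall>w v x. le w v \<longrightarrow> R v x \<longrightarrow> R w x)"

definition upset :: "('w \<Rightarrow> 'w \<Rightarrow> bool) \<Rightarrow> 'w set \<Rightarrow> bool" where
  "upset le U \<longleftrightarrow> (\<forall>x y. x \<in> U \<longrightarrow> le x y \<longrightarrow> y \<in> U)"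

primrec den :: "('w \<Rightarrow> 'w \<Rightarrow> bool) \<Rightarrow> ('w \<Rightarrow> 'w \<Rightarrow> bool) \<Rightarrow> ('v \<Rightarrow> 'w set) \<Rightarrow> 'v fm \<Rightarrow> 'w set" where
  "den le R V (Var p) = V p"
| "den le R V Bot = {}"
| "den le R V (Imp A B) = {w. \<forall>v. le w v \<longrightarrow> v \<in> den le R V A \<longrightarrow> v \<in> den le R V B}"
| "den le R V (Conj A B) = den le R V A \<inter> den le R V B"
| "den le R V (Disj A B) = den le R V A \<union> den le R V B"
| "den le R V (Box A) = {w. \<forall>x. R w x \<longrightarrow> x \<in> den le R V A}"

definition valid_in :: "('w \<Rightarrow> 'w \<Rightarrow> bool) \<Rightarrow> ('w \<Rightarrow> 'w \<Rightarrow> bool) \<Rightarrow> 'v fm \<Rightarrow> bool" where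
  "valid_in le R A \<longleftrightarrow> (\<forall>V. (\<forall>p. upset le (V p)) \<longrightarrow> den le R V A = UNIV)"

definition KM_frame :: "('w \<Rightarrow> 'w \<Rightarrow> bool) \<Rightarrow> ('w \<Rightarrow> 'w \<Rightarrow> bool) \<Rightarrow> bool" where
  "KM_frame le R \<longleftrightarrow> (\<forall>A \<in> KM. valid_in le R A)"

definition strict_part :: "('w \<Rightarrow> 'w \<Rightarrow> bool) \<Rightarrow> 'w \<Rightarrow> 'w \<Rightarrow> bool" where
  "strict_part le w v \<longleftrightarrow> le w v \<and> w \<noteq> v"

text \<open>Alexandroff topology: open sets are the upsets. Scattered: every
nonempty subset has an isolated point.\<close>
definition alex_scattered :: "('w \<Rightarrow> 'w \<Rightarrow> bool) \<Rightarrow> bool" where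
  "alex_scattered le \<longleftrightarrow>
     (\<forall>S. S \<noteq> {} \<longrightarrow> (\<exists>x\<in>S. \<exists>U. upset le U \<and> x \<in> U \<and> U \<inter> S = {x}))"

end

theory Submission
  imports Defs
begin

text \<open>Validity of the Loeb axiom (\<box>A \<rightarrow> A) \<rightarrow> A in a frame with R = \<lhd> is
the statement that \<lhd> has no infinite ascending chains, proved by
well-founded induction along \<lhd> read backwards; the axiom \<box>A \<rightarrow> (B \<rightarrow> A) \<or> B
then holds automatically, because every proper successor is an R-successor.
Conversely, in a KM frame, instances of both axioms with suitable upsets as
valuations force R = \<lhd>: the Loeb axiom yields R \<subseteq> \<lhd> and, given that, an
ascending chain contradicts it; the KM axiom says that below a proper
successor v of u there is an R-successor of u, which with the Loeb axiom
gives \<lhd> \<subseteq> R. Finally the Alexandroff topology is scattered exactly when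
there is no ascending chain, since the principal upsets form a base.\<close>

lemma den_subst: "den le R V (subst s A) = den le R (\<lambda>p. den le R V (s p)) A"
  by (induction A) auto

lemma valid_in_nec: "valid_in le R A \<Longrightarrow> valid_in le R (Box A)"
  unfolding valid_in_def by auto

lemma no_ascending_chain_iff_wfp:
  "\<not> (\<exists>f :: nat \<Rightarrow> 'w. \<forall>n. strict_part le (f n) (f (Suc n))) \<longleftrightarrow> wfp (strict_part le)\<inverse>\<inverse>"
  by (simp add: wfp_def wf_iff_no_infinite_down_chain)

locale imk_kripke_frame =
  fixes le R :: "'w \<Rightarrow> 'w \<Rightarrow> bool"
  assumes frame: "imk_frame le R"
begin

lemma refl [simp]: "le w w"
  and trans: "le u v \<Longrightarrow> le v w \<Longrightarrow> le u w"
  and antisym: "le u v \<Longrightarrow> le v u \<Longrightarrow> u = v"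
  and R_le_left: "le w v \<Longrightarrow> R v x \<Longrightarrow> R w x"
  using frame unfolding imk_frame_def by blast+

lemma upset_principal: "upset le {y. le x y}"
  unfolding upset_def using trans by blast

lemma upset_not_below: "upset le {y. \<not> le y x}"
  unfolding upset_def using trans by blast

lemma den_upset:
  assumes "\<forall>p. upset le (V p)"
  shows "upset le (den le R V A)"
  using assms by (induction A) (auto simp: upset_def intro: trans R_le_left)

lemma valid_in_subst: "valid_in le R A \<Longrightarrow> valid_in le R (subst s A)"
  unfolding valid_in_def by (simp add: den_subst den_upset)

lemma den_le_closed:
  "\<forall>p. upset le (V p) \<Longrightarrow> x \<in> den le R V A \<Longrightarrow> le x y \<Longrightarrow> y \<in> den le R V A"
  using den_upset unfolding upset_def by blast

lemma valid_in_mp: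
  fixes A B :: "'v fm"
  assumes "valid_in le R A" and "valid_in le R (Imp A B)"
  shows "valid_in le R B"
  unfolding valid_in_def
proof (intro allI impI)
  fix V :: "'v \<Rightarrow> 'w set" assume "\<forall>p. upset le (V p)"
  with assms have "den le R V A = UNIV" "den le R V (Imp A B) = UNIV"
    unfolding valid_in_def by blast+
  then show "den le R V B = UNIV" by (simp add: set_eq_iff) (meson refl)
qed

lemma valid_in_axioms:
  "valid_in le R (Imp A (Imp B A))"
  "valid_in le R (Imp (Imp A (Imp B C)) (Imp (Imp A B) (Imp A C)))"
  "valid_in le R (Imp (Conj A B) A)"
  "valid_in le R (Imp (Conj A B) B)"
  "valid_in le R (Imp A (Imp B (Conj A B)))"
  "valid_in le R (Imp A (Disj A B))"
  "valid_in le R (Imp B (Disj A B))"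
  "valid_in le R (Imp (Imp A C) (Imp (Imp B C) (Imp (Disj A B) C)))"
  "valid_in le R (Imp Bot A)"
  "valid_in le R (Imp (Box (Imp A B)) (Imp (Box A) (Box B)))"
  unfolding valid_in_def
  subgoal by (auto intro: den_le_closed)
  subgoal by (simp add: set_eq_iff) (meson refl trans)
  subgoal by auto
  subgoal by auto
  subgoal by (auto intro: den_le_closed)
  subgoal by auto
  subgoal by auto
  subgoal by (simp add: set_eq_iff) (meson refl trans)
  subgoal by auto
  subgoal by (simp add: set_eq_iff) (meson refl R_le_left)
  done

lemma loeb_induction:
  assumes R: "R = strict_part le" and wf: "wfp (strict_part le)\<inverse>\<inverse>"
    and box_imp: "\<forall>v. le u v \<longrightarrow> (\<forall>x. R v x \<longrightarrow> x \<in> P) \<longrightarrow> v \<in> P"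
  shows "u \<in> P"
  using box_imp
proof (induction u rule: wfp_induct_rule[OF wf])
  case (1 u)
  have "x \<in> P" if "R u x" for x
  proof -
    have "strict_part le u x" using that R by simp
    moreover from this have "\<forall>v. le x v \<longrightarrow> (\<forall>y. R v y \<longrightarrow> y \<in> P) \<longrightarrow> v \<in> P"
      using "1.prems" trans unfolding strict_part_def by blast
    ultimately show ?thesis using "1.IH" by simp
  qed
  then show ?case using "1.prems" refl by blast
qed

lemma valid_in_loeb:
  assumes "R = strict_part le" and "wfp (strict_part le)\<inverse>\<inverse>"
  shows "valid_in le R (Imp (Imp (Box A) A) A)"
  unfolding valid_in_def using loeb_induction[OF assms] by auto

lemma valid_in_KM_axiom:
  assumes "R = strict_part le"
  shows "valid_in le R (Imp (Box A) (Disj (Imp B A) B))"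
  unfolding valid_in_def using assms unfolding strict_part_def by auto

lemma KM_frame_if_no_ascending_chain:
  assumes "R = strict_part le" and "wfp (strict_part le)\<inverse>\<inverse>"
  shows "KM_frame le R"
  unfolding KM_frame_def
proof
  fix A assume "A \<in> KM"
  then show "valid_in le R A"
    by induction (auto intro: valid_in_axioms valid_in_loeb[OF assms] valid_in_KM_axiom[OF assms(1)]
        valid_in_mp valid_in_nec valid_in_subst)
qed

lemma alex_scattered_iff_wfp: "alex_scattered le \<longleftrightarrow> wfp (strict_part le)\<inverse>\<inverse>"
proof
  assume scattered: "alex_scattered le"
  show "wfp (strict_part le)\<inverse>\<inverse>"
    unfolding no_ascending_chain_iff_wfp[symmetric]
  proof
    assume "\<exists>f. \<forall>n. strict_part le (f n) (f (Suc n))"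
    then obtain f where f: "\<forall>n. strict_part le (f n) (f (Suc n))" by blast
    have "\<exists>x\<in>range f. \<exists>U. upset le U \<and> x \<in> U \<and> U \<inter> range f = {x}"
      using scattered[unfolded alex_scattered_def, rule_format, of "range f"] by simp
    then obtain n U where U: "upset le U" "f n \<in> U" "U \<inter> range f = {f n}" by blast
    have "strict_part le (f n) (f (Suc n))" using f ..
    then have "f (Suc n) \<in> U \<inter> range f" "f (Suc n) \<noteq> f n"
      using U(1,2) unfolding upset_def strict_part_def by auto
    then show False using U(3) by blast
  qed
next
  assume wf: "wfp (strict_part le)\<inverse>\<inverse>"
  show "alex_scattered le"
    unfolding alex_scattered_def
  proof (intro allI impI)
    fix S :: "'w set" assume "S \<noteq> {}"
    show "\<exists>x\<in>S. \<exists>U. upset le U \<and> x \<in> U \<and> U \<inter> S = {x}"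
    proof (rule ccontr)
      assume no_isolated: "\<not> ?thesis"
      have "x \<notin> S" for x
      proof (induction x rule: wfp_induct_rule[OF wf])
        case (1 x)
        show ?case
        proof
          assume "x \<in> S"
          then have "{y. le x y} \<inter> S \<noteq> {x}"
            using no_isolated upset_principal[of x] by auto
          then obtain y where "y \<in> S" "strict_part le x y"
            using \<open>x \<in> S\<close> refl unfolding strict_part_def by blast
          then show False using "1.IH" by simp
        qed
      qed
      then show False using \<open>S \<noteq> {}\<close> by blast
    qed
  qed
qed

end

locale KM_kripke_frame = imk_kripke_frame +
  assumes KM: "KM_frame le R"
begin

lemma den_KM: "A \<in> KM \<Longrightarrow> \<forall>p. upset le (V p) \<Longrightarrow> den le R V A = UNIV"
  using KM unfolding KM_frame_def valid_in_def by blast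

lemma loeb_condition:
  assumes "upset le P" and "w \<notin> P"
  shows "\<exists>v. le w v \<and> v \<notin> P \<and> (\<forall>x. R v x \<longrightarrow> x \<in> P)"
proof -
  have "w \<in> den le R (\<lambda>_. P) (Imp (Imp (Box (Var 0)) (Var 0)) (Var 0))"
    using den_KM[OF KM.axL[of "Var 0"], of "\<lambda>_. P"] assms(1) by simp
  then show ?thesis using assms(2) by simp (meson refl)
qed

lemma KM_condition:
  assumes "upset le P" and "upset le Q" and "\<forall>x. R w x \<longrightarrow> x \<in> P" and "w \<notin> Q"
    and "le w v" and "v \<in> Q"
  shows "v \<in> P"
proof -
  define V where "V = (\<lambda>n::nat. if n = 0 then P else Q)"
  have "\<forall>p. upset le (V p)" using assms(1,2) unfolding V_def by simp
  then have "w \<in> den le R V (Imp (Box (Var 0)) (Disj (Imp (Var 1) (Var 0)) (Var 1)))"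
    using den_KM[OF KM.axKM[of "Var 0" "Var 1"]] by simp
  then show ?thesis using assms(3-) unfolding V_def by simp (meson refl)
qed

lemma R_imp_not_le: "R w x \<Longrightarrow> \<not> le x w"
  using loeb_condition[OF upset_not_below, of w w] antisym by auto

lemma R_imp_le:
  assumes "R w x"
  shows "le w x"
proof -
  have "upset le {y. \<not> le y w \<and> \<not> le y x}"
    unfolding upset_def using trans by blast
  moreover have "w \<notin> {y. \<not> le y w \<and> \<not> le y x}" by simp
  ultimately obtain v where v: "le w v" "le v w \<or> le v x" "\<forall>y. R v y \<longrightarrow> \<not> le y x"
    by (auto dest!: loeb_condition)
  have "\<not> le v w"
  proof
    assume "le v w"
    then have "v = w" using antisym v(1) by blast
    then show False using v(3) assms refl by blast
  qed
  then show ?thesis using v(1,2) trans by blast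
qed

lemma R_imp_strict_part: "R w x \<Longrightarrow> strict_part le w x"
  unfolding strict_part_def using R_imp_le R_imp_not_le by auto

lemma strict_part_imp_R_below:
  assumes "strict_part le u v"
  shows "\<exists>z. R u z \<and> le z v"
proof (rule ccontr)
  assume "\<nexists>z. R u z \<and> le z v"
  then have "\<forall>x. R u x \<longrightarrow> x \<in> {y. \<not> le y v}" by blast
  moreover have "u \<notin> {y. le v y}" using assms antisym unfolding strict_part_def by blast
  ultimately have "v \<in> {y. \<not> le y v}"
    using KM_condition[OF upset_not_below upset_principal] assms unfolding strict_part_def by blast
  then show False by simp
qed

lemma strict_part_imp_R:
  assumes wv: "strict_part le w v"
  shows "R w v"
proof -
  \<comment> \<open>Loeb gives a point u above w outside P with all its R-successors in P;
    the KM condition then rules out u \<lhd> v, so u = v.\<close>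
  define P where "P = {y. \<nexists>z. le y z \<and> le z v \<and> (R w z \<or> z = w)}"
  have "upset le P" unfolding P_def upset_def using trans by blast
  moreover have "w \<notin> P" using wv unfolding P_def strict_part_def by auto
  ultimately obtain u where u: "le w u" "u \<notin> P" "\<forall>y. R u y \<longrightarrow> y \<in> P"
    using loeb_condition by blast
  from u(2) obtain z where z: "le u z" "le z v" "R w z \<or> z = w" unfolding P_def by blast
  have "u = v"
  proof (rule ccontr)
    assume "u \<noteq> v"
    then have "strict_part le u v" using trans z unfolding strict_part_def by blast
    then obtain z' where "R u z'" "le z' v" using strict_part_imp_R_below by blast
    moreover from \<open>R u z'\<close> have "R w z'" using R_le_left u(1) by blast
    ultimately show False using u(3) refl unfolding P_def by blast
  qed
  then have "z = v" using antisym trans z by blast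
  then show ?thesis using z(3) wv unfolding strict_part_def by blast
qed

lemma R_eq_strict_part: "R = strict_part le"
  using R_imp_strict_part strict_part_imp_R by blast

lemma no_ascending_chain: "\<nexists>f. \<forall>n. strict_part le (f n) (f (Suc n))"
proof
  assume "\<exists>f. \<forall>n. strict_part le (f n) (f (Suc n))"
  then obtain f where f: "\<forall>n. strict_part le (f n) (f (Suc n))" by blast
  define P where "P = {y. \<forall>n. \<not> le y (f n)}"
  have "upset le P" unfolding P_def upset_def using trans by blast
  moreover have "f 0 \<notin> P" unfolding P_def using refl by blast
  ultimately obtain v where v: "v \<notin> P" "\<forall>y. R v y \<longrightarrow> y \<in> P"
    using loeb_condition by blast
  from v(1) obtain n where "le v (f n)" unfolding P_def by blast
  then have "R v (f (Suc n))" using R_le_left strict_part_imp_R f by blast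
  then show False using v(2) refl unfolding P_def by blast
qed

end

theorem corollary4p10:
  fixes le R :: "'w \<Rightarrow> 'w \<Rightarrow> bool"
  assumes "imk_frame le R"
  shows "((R = strict_part le \<and> alex_scattered le) \<longleftrightarrow> KM_frame le R)
       \<and> (KM_frame le R \<longleftrightarrow>
            (R = strict_part le \<and> \<not> (\<exists>f :: nat \<Rightarrow> 'w. \<forall>n. strict_part le (f n) (f (Suc n)))))"
proof -
  interpret imk_kripke_frame le R by (fact imk_kripke_frame.intro[OF assms])
  have "KM_frame le R \<longleftrightarrow> R = strict_part le \<and> wfp (strict_part le)\<inverse>\<inverse>"
  proof
    assume "KM_frame le R"
    then interpret KM_kripke_frame le R by unfold_locales
    show "R = strict_part le \<and> wfp (strict_part le)\<inverse>\<inverse>"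
      using R_eq_strict_part no_ascending_chain no_ascending_chain_iff_wfp by blast
  qed (use KM_frame_if_no_ascending_chain in blast)
  then show ?thesis using alex_scattered_iff_wfp no_ascending_chain_iff_wfp by blast
qed

end
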